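(* Let $(X,\Pi)$ be a finite strictly quasiconvex quasisupermodular aggregative game. If $x^*$ is a fESS, then $x^*=\max X$ or $x^*=\min X$.
   Context: An aggregative game $(X,\Pi)$ consists of: a totally ordered action set $X$ (finite here) and a totally ordered set $Z$; a symmetric aggregator $a:X\times X\to Z$ ($a(x,y)=a(y,x)$) that is monotone increasing (if $x''\ge x'$, $y''\ge y'$ and $(x'',y'')\neq(x',y')$ then $a(x'',y'')>a(x',y')$); and $\Pi:X\times Z\to\mathbb{R}$, with underlying game payoff $\pi(x,y)=\Pi(x,a(x,y))$. Quasisupermodular: for all $z''>z'$ and $x''>x'$, $\Pi(x'',z')-\Pi(x',z')\ge0\Rightarrow\Pi(x'',z'')-\Pi(x',z'')\ge0$ and $\Pi(x'',z')-\Pi(x',z')>0\Rightarrow\Pi(x'',z'')-\Pi(x',z'')>0$. Strictly quasiconvex: for all $x<x'<x''$ in $X$ and $z\in Z$, $\Pi(x',z)<\max\{\Pi(x,z),\Pi(x'',z)\}$. fESS: $x^*$ with $\Pi(x^*,a(x^*,x))\ge\Pi(x,a(x^*,x))$ for all $x\in X$. *)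

theory Defs
  imports Complex_Main
begin

text \<open>Action set X: a finite subset of a linearly ordered type 'x.
  Aggregate set Z: the linearly ordered type 'z.\<close>

definition symmetric_aggr :: "'x set \<Rightarrow> ('x \<Rightarrow> 'x \<Rightarrow> 'z) \<Rightarrow> bool" where
  "symmetric_aggr X a \<longleftrightarrow> (\<forall>x\<in>X. \<forall>y\<in>X. a x y = a y x)"

definition monotone_increasing_aggr ::
  "('x::linorder) set \<Rightarrow> ('x \<Rightarrow> 'x \<Rightarrow> 'z::linorder) \<Rightarrow> bool" where
  "monotone_increasing_aggr X a \<longleftrightarrow>
     (\<forall>x'\<in>X. \<forall>x''\<in>X. \<forall>y'\<in>X. \<forall>y''\<in>X.
        x'' \<ge> x' \<and> y'' \<ge> y' \<and> (x'', y'') \<noteq> (x', y') \<longrightarrow> a x'' y'' > a x' y')"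

definition aggregator :: "('x::linorder) set \<Rightarrow> ('x \<Rightarrow> 'x \<Rightarrow> 'z::linorder) \<Rightarrow> bool" where
  "aggregator X a \<longleftrightarrow> symmetric_aggr X a \<and> monotone_increasing_aggr X a"

definition quasisupermodular ::
  "('x::linorder) set \<Rightarrow> ('x \<Rightarrow> 'z::linorder \<Rightarrow> real) \<Rightarrow> bool" where
  "quasisupermodular X Pi \<longleftrightarrow>
     (\<forall>z' z''. \<forall>x'\<in>X. \<forall>x''\<in>X. z'' > z' \<and> x'' > x' \<longrightarrow>
        (Pi x'' z' - Pi x' z' \<ge> 0 \<longrightarrow> Pi x'' z'' - Pi x' z'' \<ge> 0) \<and>
        (Pi x'' z' - Pi x' z' > 0 \<longrightarrow> Pi x'' z'' - Pi x' z'' > 0))"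

definition strictly_quasiconvex ::
  "('x::linorder) set \<Rightarrow> ('x \<Rightarrow> 'z \<Rightarrow> real) \<Rightarrow> bool" where
  "strictly_quasiconvex X Pi \<longleftrightarrow>
     (\<forall>x\<in>X. \<forall>x'\<in>X. \<forall>x''\<in>X. \<forall>z. x < x' \<and> x' < x'' \<longrightarrow>
        Pi x' z < max (Pi x z) (Pi x'' z))"

definition fESS :: "'x set \<Rightarrow> ('x \<Rightarrow> 'x \<Rightarrow> 'z) \<Rightarrow> ('x \<Rightarrow> 'z \<Rightarrow> real) \<Rightarrow> 'x \<Rightarrow> bool" where
  "fESS X a Pi xs \<longleftrightarrow> xs \<in> X \<and> (\<forall>x\<in>X. Pi xs (a xs x) \<ge> Pi x (a xs x))"

end

theory Submission
  imports Defs
begin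

text \<open>Suppose \<open>min X < x\<^sup>* < max X\<close> and put \<open>z = a x\<^sup>* x\<^sup>*\<close>, which lies strictly between
  \<open>a x\<^sup>* (min X)\<close> and \<open>a x\<^sup>* (max X)\<close>. The fESS property says \<open>x\<^sup>*\<close> does at least as well as
  \<open>min X\<close> at the lower aggregate and as \<open>max X\<close> at the higher one. Quasisupermodularity carries
  the first comparison up to \<open>z\<close>, and (through its strict half, read contrapositively) the second
  one down to \<open>z\<close>. So at \<open>z\<close> the interior action \<open>x\<^sup>*\<close> is weakly better than both extremes,
  which strict quasiconvexity forbids.\<close>

lemma aggregator_strict_mono_right:
  assumes "aggregator X a" and "x \<in> X" "y \<in> X" "y' \<in> X" and "y < y'"
  shows "a x y < a x y'"
  using assms unfolding aggregator_def monotone_increasing_aggr_def by fastforce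

lemma quasisupermodular_ge_mono:
  assumes "quasisupermodular X Pi" and "x' \<in> X" "x'' \<in> X" "x' < x''" and "z' < z''"
    and "Pi x' z' \<le> Pi x'' z'"
  shows "Pi x' z'' \<le> Pi x'' z''"
  using assms unfolding quasisupermodular_def by (metis diff_ge_0_iff_ge)

lemma quasisupermodular_ge_antimono:
  assumes "quasisupermodular X Pi" and "x' \<in> X" "x'' \<in> X" "x' < x''" and "z' < z''"
    and "Pi x'' z'' \<le> Pi x' z''"
  shows "Pi x'' z' \<le> Pi x' z'"
  using assms unfolding quasisupermodular_def by (meson diff_gt_0_iff_gt not_le)

lemma strictly_quasiconvex_no_interior_max:
  assumes "strictly_quasiconvex X Pi" and "x \<in> X" "x' \<in> X" "x'' \<in> X" "x < x'" "x' < x''"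
  shows "\<not> (Pi x z \<le> Pi x' z \<and> Pi x'' z \<le> Pi x' z)"
proof -
  have "Pi x' z < max (Pi x z) (Pi x'' z)"
    using assms unfolding strictly_quasiconvex_def by blast
  then show ?thesis by linarith
qed

theorem lemma7:
  fixes X :: "('x::linorder) set"
    and a :: "'x \<Rightarrow> 'x \<Rightarrow> 'z::linorder"
    and Pi :: "'x \<Rightarrow> 'z \<Rightarrow> real"
    and xs :: 'x
  assumes "finite X" and "X \<noteq> {}"
    and "aggregator X a"
    and "quasisupermodular X Pi"
    and "strictly_quasiconvex X Pi"
    and "fESS X a Pi xs"
  shows "xs = Max X \<or> xs = Min X"
proof (rule ccontr)
  assume "\<not> (xs = Max X \<or> xs = Min X)"
  moreover have xs: "xs \<in> X" and best: "\<And>x. x \<in> X \<Longrightarrow> Pi x (a xs x) \<le> Pi xs (a xs x)"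
    using assms(6) unfolding fESS_def by auto
  moreover have m: "Min X \<in> X" and M: "Max X \<in> X"
    using assms(1,2) by simp_all
  ultimately have lt: "Min X < xs" "xs < Max X"
    using assms(1) by (auto simp: order_less_le)
  have "Pi (Min X) (a xs xs) \<le> Pi xs (a xs xs)"
    using quasisupermodular_ge_mono[OF assms(4) m xs lt(1)]
      aggregator_strict_mono_right[OF assms(3) xs m xs lt(1)] best[OF m] by blast
  moreover have "Pi (Max X) (a xs xs) \<le> Pi xs (a xs xs)"
    using quasisupermodular_ge_antimono[OF assms(4) xs M lt(2)]
      aggregator_strict_mono_right[OF assms(3) xs xs M lt(2)] best[OF M] by blast
  ultimately show False
    using strictly_quasiconvex_no_interior_max[OF assms(5) m xs M lt] by blast
qed

end
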